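(* Let $A\in\mathbb{T}^{n\times d}$ and $b\in\mathbb{T}^n$, let $B$ be a tropical basis of the system $A\odot x=b$, and let $j\in[d]\setminus B$ be such that the $j$-th column of $A$ has at least one entry different from $-\infty$. Then there exists a tropical basis $B'\subset B\cup\{j\}$ with $B'\neq B$. Moreover, if the instance $(A,b)$ is nondegenerate, this basis $B'$ is unique.
   Context: $\mathbb{T}=\mathbb{R}\cup\{-\infty\}$, $\oplus=\max$, $\odot=+$, $(A\odot x)_i=\max_j(A_{ij}+x_j)$; conventions $a-(-\infty)=+\infty$ for $a\in\mathbb{T}$. A tropical (feasible) basis of $A\odot x=b$, $x\in\mathbb{T}^d$, is a subset $B\subset[d]$ of cardinality $n$ for which there is a bijection $\phi:[n]\to B$ such that for every $i\in[n]$, $b_i-A_{i\phi(i)}\in\mathbb{T}$ and it is minimal among $b_k-A_{k\phi(i)}$, $k\in[n]$. Such a basis is nondegenerate if for each $i\in[n]$ the minimum $\min_k(b_k-A_{k\phi(i)})$ is a real number attained by a unique $k$. The instance $(A,b)$ is nondegenerate if all its tropical bases are nondegenerate. *)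

theory Defs
  imports "HOL-Library.Extended_Real"
begin

text \<open>Tropical numbers T = R \<union> {-\<infinity>} are modelled as extended reals different from \<infinity>.
  Matrices A are functions nat \<Rightarrow> nat \<Rightarrow> ereal (row index in {..<n}, column index in {..<d}),
  right-hand sides b are functions nat \<Rightarrow> ereal (index in {..<n}).\<close>

definition tsub :: "ereal \<Rightarrow> ereal \<Rightarrow> ereal" where
  "tsub a c = (if c = -\<infinity> then \<infinity> else a - c)"

definition is_tropical :: "ereal \<Rightarrow> bool" where
  "is_tropical x \<longleftrightarrow> x \<noteq> \<infinity>"

definition trop_basis ::
  "nat \<Rightarrow> nat \<Rightarrow> (nat \<Rightarrow> nat \<Rightarrow> ereal) \<Rightarrow> (nat \<Rightarrow> ereal) \<Rightarrow> nat set \<Rightarrow> bool" where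
  "trop_basis n d A b B \<longleftrightarrow>
     B \<subseteq> {..<d} \<and> card B = n \<and>
     (\<exists>\<phi>. bij_betw \<phi> {..<n} B \<and>
        (\<forall>i<n. is_tropical (tsub (b i) (A i (\<phi> i))) \<and>
               (\<forall>k<n. tsub (b i) (A i (\<phi> i)) \<le> tsub (b k) (A k (\<phi> i)))))"

text \<open>Nondegenerate basis: for each i, min_k (b_k - A_{k \<phi>(i)}) is real and attained by a
  unique k. Since \<phi> is a bijection onto B, this is stated for each column index in B.\<close>
definition nondeg_trop_basis ::
  "nat \<Rightarrow> nat \<Rightarrow> (nat \<Rightarrow> nat \<Rightarrow> ereal) \<Rightarrow> (nat \<Rightarrow> ereal) \<Rightarrow> nat set \<Rightarrow> bool" where
  "nondeg_trop_basis n d A b B \<longleftrightarrow>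
     trop_basis n d A b B \<and>
     (\<forall>l\<in>B. \<exists>k<n. (\<exists>r::real. tsub (b k) (A k l) = ereal r) \<and>
                   (\<forall>k'<n. k' \<noteq> k \<longrightarrow> tsub (b k) (A k l) < tsub (b k') (A k' l)))"

definition nondeg_instance ::
  "nat \<Rightarrow> nat \<Rightarrow> (nat \<Rightarrow> nat \<Rightarrow> ereal) \<Rightarrow> (nat \<Rightarrow> ereal) \<Rightarrow> bool" where
  "nondeg_instance n d A b \<longleftrightarrow> (\<forall>B. trop_basis n d A b B \<longrightarrow> nondeg_trop_basis n d A b B)"

end

theory Submission
  imports Defs
begin

text \<open>Let \<phi> match the rows to the columns of B, row i attaining the minimum of column \<phi> i.
  If row k attains the minimum of column j, redirecting row k from \<phi> k to j gives a basis
  B - {\<phi> k} \<union> {j}; this minimum is finite because column j has a finite entry.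
  In a nondegenerate instance every basis matches each of its columns to the unique minimiser
  of that column. So a basis B' \<noteq> B inside B \<union> {j}, which must contain j, matches j to k,
  and it cannot contain \<phi> k, whose unique minimiser is k as well; counting then forces
  B' = B - {\<phi> k} \<union> {j}.\<close>

lemma bij_betw_fun_upd_exchange:
  assumes "bij_betw f I B" "i \<in> I" "y \<notin> B"
  shows "bij_betw (f(i := y)) I (insert y (B - {f i}))"
proof -
  have inj: "inj_on f I" and img: "f ` I = B" using assms(1) by (auto simp: bij_betw_def)
  have "inj_on (f(i := y)) I" using inj img assms(3) by (intro inj_on_fun_updI) auto
  moreover have "(f(i := y)) ` I = insert y (B - {f i})"
    using inj img assms(2) by (auto simp: inj_on_def)
  ultimately show ?thesis by (simp add: bij_betw_def)
qed

lemma card_insert_exchange: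
  "finite B \<Longrightarrow> c \<in> B \<Longrightarrow> j \<notin> B \<Longrightarrow> card (insert j (B - {c})) = card B"
  by (metis card_Suc_Diff1 card_insert_disjoint finite_Diff DiffD1)

lemma card_eq_subset_insert_mem:
  assumes "finite B" "B' \<subseteq> insert j B" "card B' = card B" "B' \<noteq> B"
  shows "j \<in> B'"
proof (rule ccontr)
  assume "j \<notin> B'"
  with assms(2) have "B' \<subseteq> B" by blast
  with assms(1,3,4) show False using card_subset_eq by blast
qed

lemma card_eq_subset_insert_eq_exchange:
  assumes "finite B" "B' \<subseteq> insert j B" "card B' = card B" "c \<in> B" "c \<notin> B'" "j \<notin> B"
  shows "B' = insert j (B - {c})"
proof (rule card_subset_eq)
  show "B' \<subseteq> insert j (B - {c})" using assms(2,5) by blast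
  show "card B' = card (insert j (B - {c}))"
    using assms card_insert_exchange by metis
qed (use assms(1) in simp)

definition col_argmin :: "nat \<Rightarrow> (nat \<Rightarrow> nat \<Rightarrow> ereal) \<Rightarrow> (nat \<Rightarrow> ereal) \<Rightarrow> nat \<Rightarrow> nat \<Rightarrow> bool" where
  "col_argmin n A b l k \<longleftrightarrow> k < n \<and> (\<forall>k'<n. tsub (b k) (A k l) \<le> tsub (b k') (A k' l))"

definition col_unique_argmin ::
  "nat \<Rightarrow> (nat \<Rightarrow> nat \<Rightarrow> ereal) \<Rightarrow> (nat \<Rightarrow> ereal) \<Rightarrow> nat \<Rightarrow> nat \<Rightarrow> bool" where
  "col_unique_argmin n A b l k \<longleftrightarrow>
     k < n \<and> (\<forall>k'<n. k' \<noteq> k \<longrightarrow> tsub (b k) (A k l) < tsub (b k') (A k' l))"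

definition basis_matching ::
  "nat \<Rightarrow> (nat \<Rightarrow> nat \<Rightarrow> ereal) \<Rightarrow> (nat \<Rightarrow> ereal) \<Rightarrow> nat set \<Rightarrow> (nat \<Rightarrow> nat) \<Rightarrow> bool" where
  "basis_matching n A b B \<phi> \<longleftrightarrow>
     bij_betw \<phi> {..<n} B \<and>
     (\<forall>i<n. is_tropical (tsub (b i) (A i (\<phi> i))) \<and> col_argmin n A b (\<phi> i) i)"

lemma trop_basis_iff_matching:
  "trop_basis n d A b B \<longleftrightarrow>
     B \<subseteq> {..<d} \<and> card B = n \<and> (\<exists>\<phi>. basis_matching n A b B \<phi>)"
  unfolding trop_basis_def basis_matching_def col_argmin_def by blast

lemma tsub_tropical: "a \<noteq> \<infinity> \<Longrightarrow> c \<noteq> -\<infinity> \<Longrightarrow> is_tropical (tsub a c)"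
  by (cases a; cases c) (auto simp: tsub_def is_tropical_def)

lemma col_argmin_exists:
  assumes "0 < n" shows "\<exists>k. col_argmin n A b l k"
proof -
  obtain k where "is_arg_min (\<lambda>k. tsub (b k) (A k l)) (\<lambda>k. k \<in> {..<n}) k"
    using ex_is_arg_min_if_finite[of "{..<n}"] assms by auto
  then show ?thesis by (auto simp: col_argmin_def is_arg_min_linorder)
qed

lemma col_argmin_tropical_exists:
  assumes "i < n" "is_tropical (b i)" "A i l \<noteq> -\<infinity>"
  shows "\<exists>k. col_argmin n A b l k \<and> is_tropical (tsub (b k) (A k l))"
proof -
  obtain k where k: "col_argmin n A b l k" using col_argmin_exists[of n A b l] assms(1) by auto
  have "tsub (b k) (A k l) \<le> tsub (b i) (A i l)" using k assms(1) by (simp add: col_argmin_def)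
  moreover have "is_tropical (tsub (b i) (A i l))"
    using assms(2,3) by (intro tsub_tropical) (auto simp: is_tropical_def)
  ultimately show ?thesis using k by (auto simp: is_tropical_def)
qed

lemma col_unique_argmin_imp_col_argmin:
  "col_unique_argmin n A b l k \<Longrightarrow> col_argmin n A b l k"
  unfolding col_unique_argmin_def col_argmin_def by (metis order.order_iff_strict)

lemma col_argmin_eq_unique_argmin:
  "col_unique_argmin n A b l k \<Longrightarrow> col_argmin n A b l i \<Longrightarrow> i = k"
  unfolding col_unique_argmin_def col_argmin_def by (meson not_less)

lemma col_unique_argmin_unique:
  "col_unique_argmin n A b l k \<Longrightarrow> col_unique_argmin n A b l k' \<Longrightarrow> k = k'"
  using col_argmin_eq_unique_argmin col_unique_argmin_imp_col_argmin by blast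

lemma trop_basis_exchange:
  assumes basis: "trop_basis n d A b B" and \<phi>: "basis_matching n A b B \<phi>"
    and j: "j < d" "j \<notin> B"
    and k: "col_argmin n A b j k" "is_tropical (tsub (b k) (A k j))"
  shows "trop_basis n d A b (insert j (B - {\<phi> k}))"
  unfolding trop_basis_iff_matching
proof (intro conjI exI)
  have "k < n" using k(1) by (simp add: col_argmin_def)
  then have "\<phi> k \<in> B" using \<phi> by (auto simp: basis_matching_def bij_betw_def)
  moreover have "finite B" "card B = n"
    using basis by (auto simp: trop_basis_def intro: finite_subset)
  ultimately show "card (insert j (B - {\<phi> k})) = n"
    using j(2) card_insert_exchange by metis
  show "insert j (B - {\<phi> k}) \<subseteq> {..<d}"
    using basis j(1) by (auto simp: trop_basis_def)
  show "basis_matching n A b (insert j (B - {\<phi> k})) (\<phi>(k := j))"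
    using \<phi> k \<open>k < n\<close> j(2)
    by (auto simp: basis_matching_def intro: bij_betw_fun_upd_exchange)
qed

lemma nondeg_matching_col_unique_argmin:
  assumes nd: "nondeg_instance n d A b" and basis: "trop_basis n d A b B"
    and \<phi>: "basis_matching n A b B \<phi>" and i: "i < n"
  shows "col_unique_argmin n A b (\<phi> i) i"
proof -
  have "\<phi> i \<in> B" using \<phi> i by (auto simp: basis_matching_def bij_betw_def)
  with nd basis obtain k where "col_unique_argmin n A b (\<phi> i) k"
    unfolding nondeg_instance_def nondeg_trop_basis_def col_unique_argmin_def by blast
  moreover have "col_argmin n A b (\<phi> i) i" using \<phi> i by (simp add: basis_matching_def)
  ultimately show ?thesis using col_argmin_eq_unique_argmin by blast
qed

lemma nondeg_exchange_determined:
  assumes nd: "nondeg_instance n d A b"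
    and basis: "trop_basis n d A b B" and \<phi>: "basis_matching n A b B \<phi>"
    and j: "j \<notin> B" and k: "col_argmin n A b j k"
    and basis': "trop_basis n d A b B'" and sub: "B' \<subseteq> insert j B" and ne: "B' \<noteq> B"
  shows "B' = insert j (B - {\<phi> k})"
proof -
  have finB: "finite B" and cards: "card B' = card B"
    using basis basis' by (auto simp: trop_basis_def intro: finite_subset)
  obtain \<psi> where \<psi>: "basis_matching n A b B' \<psi>"
    using basis' by (auto simp: trop_basis_iff_matching)
  then have \<psi>_bij: "bij_betw \<psi> {..<n} B'" by (simp add: basis_matching_def)
  have "j \<in> B'" using card_eq_subset_insert_mem[OF finB sub cards ne] .
  then obtain k' where k': "k' < n" "\<psi> k' = j"
    using \<psi>_bij by (auto simp: bij_betw_def)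
  have "col_unique_argmin n A b j k'"
    using nondeg_matching_col_unique_argmin[OF nd basis' \<psi> k'(1)] k'(2) by simp
  then have "k = k'" using k by (rule col_argmin_eq_unique_argmin)
  with k' have \<psi>k: "k < n" "\<psi> k = j" by simp_all
  then have \<phi>k: "\<phi> k \<in> B" using \<phi> by (auto simp: basis_matching_def bij_betw_def)
  have "\<phi> k \<notin> B'"
  proof
    assume "\<phi> k \<in> B'"
    then obtain i where i: "i < n" "\<psi> i = \<phi> k" using \<psi>_bij by (auto simp: bij_betw_def)
    have "i = k"
      using nondeg_matching_col_unique_argmin[OF nd basis' \<psi> i(1)]
        nondeg_matching_col_unique_argmin[OF nd basis \<phi> \<psi>k(1)] i(2)
      by (simp add: col_unique_argmin_unique)
    with i \<psi>k \<phi>k j show False by simp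
  qed
  with finB sub cards \<phi>k j show ?thesis by (intro card_eq_subset_insert_eq_exchange)
qed

theorem lemma4p2:
  fixes n d :: nat and A :: "nat \<Rightarrow> nat \<Rightarrow> ereal" and b :: "nat \<Rightarrow> ereal"
    and B :: "nat set" and j :: nat
  assumes A_trop: "\<forall>i<n. \<forall>l<d. is_tropical (A i l)"
    and b_trop: "\<forall>i<n. is_tropical (b i)"
    and basis: "trop_basis n d A b B"
    and j: "j < d" "j \<notin> B"
    and col: "\<exists>i<n. A i j \<noteq> -\<infinity>"
  shows "(\<exists>B'. B' \<subseteq> B \<union> {j} \<and> B' \<noteq> B \<and> trop_basis n d A b B') \<and>
         (nondeg_instance n d A b \<longrightarrow>
            (\<exists>!B'. B' \<subseteq> B \<union> {j} \<and> B' \<noteq> B \<and> trop_basis n d A b B'))"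
proof -
  obtain \<phi> where \<phi>: "basis_matching n A b B \<phi>"
    using basis by (auto simp: trop_basis_iff_matching)
  obtain i where "i < n" "A i j \<noteq> -\<infinity>" using col by blast
  then obtain k where k: "col_argmin n A b j k" "is_tropical (tsub (b k) (A k j))"
    using b_trop col_argmin_tropical_exists[of i n b A j] by auto
  define B' where "B' = insert j (B - {\<phi> k})"
  have B': "B' \<subseteq> B \<union> {j} \<and> B' \<noteq> B \<and> trop_basis n d A b B'"
    using trop_basis_exchange[OF basis \<phi> j k] j(2) by (auto simp: B'_def)
  show ?thesis
  proof (intro conjI impI)
    show "\<exists>B'. B' \<subseteq> B \<union> {j} \<and> B' \<noteq> B \<and> trop_basis n d A b B'" using B' by blast
    assume nd: "nondeg_instance n d A b"
    show "\<exists>!B'. B' \<subseteq> B \<union> {j} \<and> B' \<noteq> B \<and> trop_basis n d A b B'"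
      using B' nondeg_exchange_determined[OF nd basis \<phi> j(2) k(1)]
      by (intro ex1I[of _ B']) (auto simp: B'_def)
  qed
qed

end
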